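(* Let $\Sigma=\{0,1\}$ and $(p_{ij})$ a transition matrix with $p_{ij}\in(0,1)$ for all $i,j$ and $p_{ij}\ne\tfrac12$ for some $(i,j)$. For $i\in\Sigma$ let $B_n^i$ be the number of bucket operations of radix sort on $n$ i.i.d. strings from the Markov source with transition matrix $(p_{ij})$ and initial distribution $\rho_i=p_{i0}\delta_0+p_{i1}\delta_1$, and set $f_i(n)=\mathbb E[B_n^i]-\frac1H n\log n$ for $n\in\mathbb N_0$ (with $0\log 0=0$). Then there exists a constant $C>0$ such that for both $i\in\Sigma$ and all $m,n\in\mathbb N_0$, $$|f_i(m)-f_i(n)|\le C|m-n|.$$
   Context: Markov source: strings $\xi_1\xi_2\ldots$ with $\mathbb P(\xi_1=j)=\mu_j$ (here $\mu=\rho_i$), $\mathbb P(\xi_{k+1}=j\mid\xi_k=i)=p_{ij}$, independent across strings. $B_n^\mu=\sum_{j=1}^nD_j$, $D_j$ the smallest $k\ge0$ such that no other string shares its first $k$ symbols. $\pi_0=p_{10}/(p_{01}+p_{10})$, $\pi_1=p_{01}/(p_{01}+p_{10})$, $H_i=-\sum_jp_{ij}\log p_{ij}$, $H=\pi_0H_0+\pi_1H_1$. *)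

theory Defs
  imports "HOL-Probability.Probability"
begin

text \<open>Alphabet \<Sigma> = {0,1} (as natural numbers). A string is a function nat => nat,
  position t (starting at 0) holding the (t+1)-st symbol.\<close>

definition word_prob :: "(nat \<Rightarrow> real) \<Rightarrow> (nat \<Rightarrow> nat \<Rightarrow> real) \<Rightarrow> nat list \<Rightarrow> real" where
  "word_prob mu p w =
     (if w = [] then 1
      else mu (w ! 0) * (\<Prod>k<length w - 1. p (w ! k) (w ! Suc k)))"

definition markov_strings ::
  "'a measure \<Rightarrow> (nat \<Rightarrow> 'a \<Rightarrow> nat \<Rightarrow> nat) \<Rightarrow> (nat \<Rightarrow> real) \<Rightarrow> (nat \<Rightarrow> nat \<Rightarrow> real) \<Rightarrow> bool" where
  "markov_strings M xi mu p \<longleftrightarrow>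
     prob_space M \<and>
     prob_space.indep_vars M (\<lambda>_. Pi\<^sub>M UNIV (\<lambda>_. count_space UNIV)) xi UNIV \<and>
     (\<forall>j w. set w \<subseteq> {0, 1} \<longrightarrow>
        measure M {\<omega> \<in> space M. \<forall>t<length w. xi j \<omega> t = w ! t} = word_prob mu p w)"

definition depth :: "(nat \<Rightarrow> nat \<Rightarrow> nat) \<Rightarrow> nat \<Rightarrow> nat \<Rightarrow> nat" where
  "depth X n j = (LEAST k. \<forall>l<n. l \<noteq> j \<longrightarrow> (\<exists>t<k. X l t \<noteq> X j t))"

definition bucket_ops :: "(nat \<Rightarrow> nat \<Rightarrow> nat) \<Rightarrow> nat \<Rightarrow> nat" where
  "bucket_ops X n = (\<Sum>j<n. depth X n j)"

definition stat0 :: "(nat \<Rightarrow> nat \<Rightarrow> real) \<Rightarrow> real" where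
  "stat0 p = p 1 0 / (p 0 1 + p 1 0)"
definition stat1 :: "(nat \<Rightarrow> nat \<Rightarrow> real) \<Rightarrow> real" where
  "stat1 p = p 0 1 / (p 0 1 + p 1 0)"
definition row_entropy :: "(nat \<Rightarrow> nat \<Rightarrow> real) \<Rightarrow> nat \<Rightarrow> real" where
  "row_entropy p i = - (\<Sum>j\<in>{0,1::nat}. p i j * ln (p i j))"
definition entropy_rate :: "(nat \<Rightarrow> nat \<Rightarrow> real) \<Rightarrow> real" where
  "entropy_rate p = stat0 p * row_entropy p 0 + stat1 p * row_entropy p 1"

definition nlogn :: "nat \<Rightarrow> real" where
  "nlogn n = (if n = 0 then 0 else real n * ln (real n))"

definition f_dev :: "'a measure \<Rightarrow> (nat \<Rightarrow> 'a \<Rightarrow> nat \<Rightarrow> nat) \<Rightarrow> (nat \<Rightarrow> nat \<Rightarrow> real) \<Rightarrow> nat \<Rightarrow> real" where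
  "f_dev M xi p n =
     (\<integral>\<omega>. real (bucket_ops (\<lambda>j. xi j \<omega>) n) \<partial>M) - nlogn n / entropy_rate p"

end

theory Submission
  imports Defs
begin

text \<open>Write \<open>\<pi>\<^sub>i(w)\<close> for the probability that a string from source \<open>i\<close> begins with the word
  \<open>w\<close>. By independence of the strings, \<open>P(D\<^sub>j > k)\<close> is the sum over the words \<open>w\<close> of length \<open>k\<close>
  of \<open>\<phi>\<^sub>n(\<pi>\<^sub>i(w))\<close>, where \<open>\<phi>\<^sub>n(x) = x (1 - (1 - x)^(n - 1))\<close>; hence \<open>E B\<^sub>n\<^sub>+\<^sub>1 - E B\<^sub>n\<close> is the
  sum over all words of \<open>\<Phi>\<^sub>n(\<pi>\<^sub>i(w))\<close> with \<open>\<Phi>\<^sub>n(x) = x (1 - (1 - x)^(n - 1) (1 - (n + 1) x))\<close>.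
  For \<open>x \<ge> 1/n\<close>, \<open>\<Phi>\<^sub>n(x)\<close> is within \<open>O(1/n)\<close> of \<open>x\<close>, and below \<open>1/n\<close> it is \<open>O(n x^2)\<close>; counting
  the words of probability at least \<open>1/n\<close> and summing the squares of the others shows that
  both errors are \<open>O(1)\<close>. The main part, the sum of \<open>\<pi>\<^sub>i(w)\<close> over the words with \<open>\<pi>\<^sub>i(w) \<ge> t\<close>,
  satisfies a renewal equation whose solution is \<open>- ln t / H + h\<^sub>i\<close>, so it equals
  \<open>ln n / H + O(1)\<close> at \<open>t = 1/n\<close>. As \<open>(n + 1) ln (n + 1) - n ln n = ln n + O(1)\<close>, the
  increments of \<open>f\<^sub>i\<close> are bounded uniformly in \<open>n\<close> and \<open>i\<close>.\<close>

lemma lipschitz_of_bounded_increments: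
  fixes g :: "nat \<Rightarrow> real"
  assumes "\<And>n. \<bar>g (Suc n) - g n\<bar> \<le> C"
  shows "\<bar>g m - g n\<bar> \<le> C * \<bar>real m - real n\<bar>"
proof -
  have shift: "\<bar>g (n + d) - g n\<bar> \<le> C * real d" for n d
  proof (induction d)
    case (Suc d)
    have "\<bar>g (n + Suc d) - g n\<bar> \<le> \<bar>g (Suc (n + d)) - g (n + d)\<bar> + \<bar>g (n + d) - g n\<bar>" by simp
    also have "\<dots> \<le> C + C * real d" using assms Suc.IH by (intro add_mono) auto
    finally show ?case by (simp add: algebra_simps)
  qed simp
  show ?thesis
  proof (cases "n \<le> m")
    case True
    then obtain d where "m = n + d" using le_Suc_ex by blast
    then show ?thesis using shift[of n d] by simp
  next
    case False
    then obtain d where "n = m + d" by (metis le_Suc_ex nat_le_linear)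
    then show ?thesis using shift[of m d] by (simp add: abs_minus_commute)
  qed
qed

lemma cube_div_27_le_exp:
  fixes y :: real
  assumes "0 \<le> y"
  shows "y ^ 3 / 27 \<le> exp y"
proof -
  have "exp y = exp (y / 3) ^ 3" by (simp add: exp_of_nat_mult[symmetric])
  moreover have "y / 3 \<le> exp (y / 3)" using exp_ge_add_one_self[of "y / 3"] by linarith
  ultimately have "(y / 3) ^ 3 \<le> exp y" using assms by (metis power_mono divide_nonneg_pos zero_less_numeral)
  then show ?thesis by (simp add: power_divide)
qed

lemma one_minus_power_mult_cube_le:
  fixes x :: real
  assumes "0 \<le> x" "x \<le> 1"
  shows "(1 - x) ^ m * (real m * x) ^ 3 \<le> 27"
proof -
  have "(1 - x) ^ m \<le> exp (- x) ^ m"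
    using assms exp_ge_add_one_self[of "- x"] by (intro power_mono) auto
  also have "\<dots> = exp (- (real m * x))" by (simp add: exp_of_nat_mult[symmetric])
  finally have "(1 - x) ^ m * (real m * x) ^ 3 \<le> exp (- (real m * x)) * (real m * x) ^ 3"
    using assms by (intro mult_right_mono) auto
  also have "\<dots> \<le> exp (- (real m * x)) * (27 * exp (real m * x))"
    using cube_div_27_le_exp[of "real m * x"] assms by (intro mult_left_mono) auto
  also have "\<dots> = 27" by (simp add: exp_minus field_simps)
  finally show ?thesis .
qed

lemma nlogn_Suc_minus_ln:
  assumes "1 \<le> n"
  shows "\<bar>nlogn (Suc n) - nlogn n - ln (real n)\<bar> \<le> 2"
proof -
  have "1 + 1 / real n = (real n + 1) / real n" using assms by (simp add: field_simps)
  then have l: "ln (1 + 1 / real n) = ln (real n + 1) - ln (real n)" using assms by (simp add: ln_div)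
  have "nlogn (Suc n) - nlogn n - ln (real n) = (real n + 1) * (ln (real n + 1) - ln (real n))"
    using assms by (simp add: nlogn_def algebra_simps)
  then have "nlogn (Suc n) - nlogn n - ln (real n) = (real n + 1) * ln (1 + 1 / real n)"
    unfolding l .
  moreover have "0 \<le> ln (1 + 1 / real n)" by simp
  moreover have "(real n + 1) * ln (1 + 1 / real n) \<le> (real n + 1) * (1 / real n)"
    using assms by (intro mult_left_mono ln_add_one_self_le_self) auto
  moreover have "(real n + 1) * (1 / real n) \<le> 2" using assms by (simp add: field_simps)
  ultimately show ?thesis by simp
qed

text \<open>\<open>share_prob n x\<close> is the probability that a fixed one of \<open>n\<close> independent strings starts
  with a given word of probability \<open>x\<close> and at least one of the other \<open>n - 1\<close> strings does too.\<close>

definition share_prob :: "nat \<Rightarrow> real \<Rightarrow> real" where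
  "share_prob n x = x * (1 - (1 - x) ^ (n - 1))"

definition share_increment :: "nat \<Rightarrow> real \<Rightarrow> real" where
  "share_increment n x = x * (1 - (1 - x) ^ (n - 1) * (1 - (real n + 1) * x))"

lemma share_increment_eq:
  assumes "1 \<le> n"
  shows "real (Suc n) * share_prob (Suc n) x - real n * share_prob n x = share_increment n x"
proof -
  have pow: "(1 - x) ^ (Suc n - 1) = (1 - x) ^ (n - 1) * (1 - x)" using assms by (cases n) auto
  show ?thesis unfolding share_prob_def share_increment_def pow by (simp add: algebra_simps)
qed

lemma share_prob_bounds:
  assumes "0 \<le> x" "x \<le> 1"
  shows "0 \<le> share_prob n x" "share_prob n x \<le> real n * x ^ 2"
proof -
  have "(1 - x) ^ (n - 1) \<le> 1" using assms by (intro power_le_one) auto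
  moreover have "1 - real (n - 1) * x \<le> (1 - x) ^ (n - 1)"
    using Bernoulli_inequality[of "- x" "n - 1"] assms by simp
  moreover have "real (n - 1) * x \<le> real n * x" using assms by (intro mult_right_mono) auto
  ultimately have "0 \<le> 1 - (1 - x) ^ (n - 1)" "1 - (1 - x) ^ (n - 1) \<le> real n * x" by auto
  then have "0 \<le> x * (1 - (1 - x) ^ (n - 1))" "x * (1 - (1 - x) ^ (n - 1)) \<le> x * (real n * x)"
    using assms by (auto intro: mult_left_mono)
  then show "0 \<le> share_prob n x" "share_prob n x \<le> real n * x ^ 2"
    unfolding share_prob_def by (simp_all add: power2_eq_square algebra_simps)
qed

lemma share_increment_large:
  fixes x :: real
  assumes n: "1 \<le> n" and x: "1 / real n \<le> x" "x \<le> 1"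
  shows "\<bar>share_increment n x - x\<bar> \<le> 648 / real n"
proof (cases "n = 1")
  case True
  then show ?thesis using x by (simp add: share_increment_def)
next
  case False
  define m where "m = n - 1"
  have m: "0 < m" "real n \<le> 2 * real m" using n False by (auto simp: m_def)
  have "0 < 1 / real n" using n by simp
  then have x0: "0 < x" using x by linarith
  have nx: "1 \<le> real n * x" using x n by (simp add: field_simps)
  have "share_increment n x - x = - (x * (1 - x) ^ m * (1 - (real n + 1) * x))"
    by (simp add: share_increment_def m_def algebra_simps)
  then have "\<bar>share_increment n x - x\<bar> = x * (1 - x) ^ m * \<bar>1 - (real n + 1) * x\<bar>"
    using x0 x by (simp add: abs_mult)
  also have "\<dots> \<le> x * (1 - x) ^ m * (3 * real n * x)"
    using x0 x nx by (intro mult_left_mono) (auto simp: algebra_simps)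
  also have "\<dots> = 3 * real n * x ^ 2 * (1 - x) ^ m" by (simp add: power2_eq_square)
  also have "\<dots> \<le> 3 * real n * x ^ 2 * (27 / (real m * x) ^ 3)"
  proof -
    have "(1 - x) ^ m \<le> 27 / (real m * x) ^ 3"
      using one_minus_power_mult_cube_le[of x m] x0 x m by (simp add: field_simps)
    then show ?thesis using x0 by (intro mult_left_mono) auto
  qed
  also have "\<dots> = 81 * real n / (real m ^ 3 * x)"
    using x0 m by (simp add: field_simps power3_eq_cube power2_eq_square)
  also have "\<dots> \<le> 81 * real n / (real m ^ 3 * (1 / real n))"
    using x0 m n x by (intro divide_left_mono mult_left_mono mult_pos_pos) auto
  also have "\<dots> \<le> 648 / real n"
  proof -
    have "real n ^ 3 \<le> (2 * real m) ^ 3" using m by (intro power_mono) auto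
    then show ?thesis using m n by (simp add: field_simps power3_eq_cube)
  qed
  finally show ?thesis .
qed

lemma share_increment_nonneg:
  fixes x :: real
  assumes "0 \<le> x" "x \<le> 1"
  shows "0 \<le> share_increment n x"
proof -
  have pm: "0 \<le> (1 - x) ^ (n - 1)" "(1 - x) ^ (n - 1) \<le> 1" using assms by (auto intro: power_le_one)
  have "(1 - x) ^ (n - 1) * (1 - (real n + 1) * x) \<le> 1"
  proof (cases "0 \<le> 1 - (real n + 1) * x")
    case True
    have "(1 - x) ^ (n - 1) * (1 - (real n + 1) * x) \<le> 1 * 1" using pm True assms by (intro mult_mono) auto
    then show ?thesis by simp
  next
    case False
    then have "(1 - x) ^ (n - 1) * (1 - (real n + 1) * x) \<le> 0" using pm by (intro mult_nonneg_nonpos) auto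
    then show ?thesis by simp
  qed
  then show ?thesis unfolding share_increment_def using assms by simp
qed

lemma share_increment_le_square:
  fixes x :: real
  assumes n: "1 \<le> n" and x: "0 \<le> x" "x \<le> 1"
  shows "share_increment n x \<le> 4 * real n * x ^ 2"
proof -
  define m where "m = n - 1"
  have m_eq: "real m = real n - 1" using n by (simp add: m_def)
  have "1 - (1 - x) ^ m * (1 - (real n + 1) * x) \<le> 4 * real n * x"
  proof (cases "0 \<le> 1 - (real n + 1) * x")
    case True
    have "(1 - real m * x) * (1 - (real n + 1) * x) \<le> (1 - x) ^ m * (1 - (real n + 1) * x)"
      using Bernoulli_inequality[of "- x" m] x True by (intro mult_right_mono) auto
    moreover have "1 - real m * x - (real n + 1) * x \<le> (1 - real m * x) * (1 - (real n + 1) * x)"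
    proof -
      have "0 \<le> (real m * x) * ((real n + 1) * x)" using x by simp
      then show ?thesis by (simp add: algebra_simps)
    qed
    moreover have "real m * x = real n * x - x" unfolding m_eq by (simp add: algebra_simps)
    moreover have "0 \<le> real n * x" using x by simp
    ultimately show ?thesis by (simp add: algebra_simps)
  next
    case False
    have "(real n + 1) * x \<le> 2 * real n * x" using x n by (intro mult_right_mono) auto
    moreover have "(1 - x) ^ m * ((real n + 1) * x - 1) \<le> (real n + 1) * x - 1"
      using x False by (intro mult_left_le_one_le) (auto intro: power_le_one)
    ultimately show ?thesis using False by (simp add: algebra_simps)
  qed
  then have "share_increment n x \<le> x * (4 * real n * x)"
    unfolding share_increment_def m_def[symmetric] using x by (intro mult_left_mono) auto
  then show ?thesis by (simp add: power2_eq_square algebra_simps)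
qed

section \<open>Sums over the words of one level\<close>

locale binary_transition_matrix =
  fixes p :: "nat \<Rightarrow> nat \<Rightarrow> real"
  assumes p_pos: "\<And>i j. i \<in> {0,1} \<Longrightarrow> j \<in> {0,1} \<Longrightarrow> 0 < p i j"
    and p_less_1: "\<And>i j. i \<in> {0,1} \<Longrightarrow> j \<in> {0,1} \<Longrightarrow> p i j < 1"
    and p_row_sum: "\<And>i. i \<in> {0,1} \<Longrightarrow> p i 0 + p i 1 = 1"
begin

definition words :: "nat \<Rightarrow> nat list set" where
  "words k = {w. set w \<subseteq> {0,1} \<and> length w = k}"

definition prefix_prob :: "nat \<Rightarrow> nat list \<Rightarrow> real" where
  "prefix_prob i w = word_prob (p i) p w"

definition level_sum :: "nat \<Rightarrow> (real \<Rightarrow> real) \<Rightarrow> nat \<Rightarrow> real" where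
  "level_sum i G k = (\<Sum>w\<in>words k. G (prefix_prob i w))"

definition level_sum_upto :: "nat \<Rightarrow> (real \<Rightarrow> real) \<Rightarrow> nat \<Rightarrow> real" where
  "level_sum_upto i G K = (\<Sum>k<K. level_sum i G k)"

definition pmax :: real where "pmax = max (max (p 0 0) (p 0 1)) (max (p 1 0) (p 1 1))"
definition pmin :: real where "pmin = min (min (p 0 0) (p 0 1)) (min (p 1 0) (p 1 1))"

lemma pmax_bounds: "0 < pmax" "pmax < 1" "\<And>i j. i \<in> {0,1} \<Longrightarrow> j \<in> {0,1} \<Longrightarrow> p i j \<le> pmax"
  using p_pos p_less_1 unfolding pmax_def by (auto simp: max_def)

lemma pmin_bounds: "0 < pmin" "pmin < 1" "\<And>i j. i \<in> {0,1} \<Longrightarrow> j \<in> {0,1} \<Longrightarrow> pmin \<le> p i j"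
  using p_pos p_less_1 unfolding pmin_def by (auto simp: min_def)

lemma pmax_power_le_1: "pmax ^ k \<le> 1"
  using pmax_bounds by (simp add: power_le_one)

lemma finite_words: "finite (words k)"
  unfolding words_def by (rule finite_lists_length_eq) auto

lemma words_0: "words 0 = {[]}"
  unfolding words_def by auto

lemma words_Suc: "words (Suc k) = (\<lambda>(a, v). a # v) ` ({0,1} \<times> words k)"
  unfolding words_def by (auto simp: image_iff length_Suc_conv)

lemma prefix_prob_Nil: "prefix_prob i [] = 1"
  by (simp add: prefix_prob_def word_prob_def)

lemma prefix_prob_Cons: "prefix_prob i (a # v) = p i a * prefix_prob a v"
proof (cases v)
  case Nil then show ?thesis by (simp add: prefix_prob_def word_prob_def)
next
  case (Cons b rest)
  show ?thesis unfolding prefix_prob_def word_prob_def Cons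
    by (simp del: prod.lessThan_Suc add: prod.lessThan_Suc_shift)
qed

lemma prefix_prob_bounds:
  "i \<in> {0,1} \<Longrightarrow> w \<in> words k \<Longrightarrow> 0 < prefix_prob i w \<and> prefix_prob i w \<le> pmax ^ k"
proof (induction k arbitrary: i w)
  case 0 then show ?case by (simp add: words_0 prefix_prob_Nil)
next
  case (Suc k)
  then obtain a v where w: "w = a # v" "a \<in> {0,1}" "v \<in> words k" by (auto simp: words_Suc)
  have "0 < p i a" "p i a \<le> pmax" using p_pos pmax_bounds Suc.prems w by auto
  then show ?case using Suc.IH[OF w(2,3)] by (auto simp: w prefix_prob_Cons intro: mult_mono)
qed

lemma level_sum_0: "level_sum i G 0 = G 1"
  by (simp add: level_sum_def words_0 prefix_prob_Nil)

lemma level_sum_Suc: "level_sum i G (Suc k) = (\<Sum>a\<in>{0,1}. level_sum a (\<lambda>x. G (p i a * x)) k)"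
proof -
  have inj: "inj_on (\<lambda>(a, v). a # v) ({0::nat,1} \<times> words k)" by (auto simp: inj_on_def)
  have "level_sum i G (Suc k) = (\<Sum>(a, v)\<in>{0::nat,1} \<times> words k. G (prefix_prob i (a # v)))"
    unfolding level_sum_def words_Suc by (subst sum.reindex[OF inj]) (simp add: case_prod_unfold)
  also have "\<dots> = (\<Sum>a\<in>{0::nat,1}. \<Sum>v\<in>words k. G (prefix_prob i (a # v)))"
    by (subst sum.cartesian_product[symmetric]) simp
  finally show ?thesis by (simp add: level_sum_def prefix_prob_Cons)
qed

lemma level_sum_mono:
  assumes "i \<in> {0,1}" "\<And>x. 0 < x \<Longrightarrow> x \<le> pmax ^ k \<Longrightarrow> G x \<le> G' x"
  shows "level_sum i G k \<le> level_sum i G' k"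
  unfolding level_sum_def by (rule sum_mono) (use assms prefix_prob_bounds in auto)

lemma level_sum_cong:
  assumes "i \<in> {0,1}" "\<And>x. 0 < x \<Longrightarrow> x \<le> pmax ^ k \<Longrightarrow> G x = G' x"
  shows "level_sum i G k = level_sum i G' k"
  unfolding level_sum_def by (rule sum.cong) (use assms prefix_prob_bounds in auto)

lemma level_sum_nonneg:
  "i \<in> {0,1} \<Longrightarrow> (\<And>x. 0 < x \<Longrightarrow> x \<le> pmax ^ k \<Longrightarrow> 0 \<le> G x) \<Longrightarrow> 0 \<le> level_sum i G k"
  using level_sum_mono[of i k "\<lambda>_. 0" G] by (simp add: level_sum_def)

lemma level_sum_zero: "level_sum i (\<lambda>_. 0) k = 0"
  by (simp add: level_sum_def)

lemma level_sum_add: "level_sum i (\<lambda>x. G x + G' x) k = level_sum i G k + level_sum i G' k"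
  unfolding level_sum_def by (simp add: sum.distrib)

lemma level_sum_diff: "level_sum i (\<lambda>x. G x - G' x) k = level_sum i G k - level_sum i G' k"
  unfolding level_sum_def by (simp add: sum_subtractf)

lemma level_sum_cmult: "level_sum i (\<lambda>x. c * G x) k = c * level_sum i G k"
  unfolding level_sum_def by (simp add: sum_distrib_left)

lemma level_sum_abs_le: "\<bar>level_sum i G k\<bar> \<le> level_sum i (\<lambda>x. \<bar>G x\<bar>) k"
  unfolding level_sum_def by (rule sum_abs)

lemma level_sum_linear: "i \<in> {0,1} \<Longrightarrow> level_sum i (\<lambda>x. c * x) k = c"
proof (induction k arbitrary: i c)
  case 0 then show ?case by (simp add: level_sum_0)
next
  case (Suc k)
  have "level_sum i (\<lambda>x. c * x) (Suc k) = (\<Sum>a\<in>{0::nat,1}. level_sum a (\<lambda>x. (c * p i a) * x) k)"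
    by (simp add: level_sum_Suc mult.assoc)
  also have "\<dots> = (\<Sum>a\<in>{0::nat,1}. c * p i a)"
    by (rule sum.cong) (use Suc.IH in auto)
  also have "\<dots> = c * (p i 0 + p i 1)" by (simp add: algebra_simps)
  finally show ?case using p_row_sum[OF Suc.prems] by simp
qed

lemma level_sum_le_geometric:
  assumes "i \<in> {0,1}" "\<And>x. 0 < x \<Longrightarrow> x \<le> 1 \<Longrightarrow> 0 \<le> G x \<and> G x \<le> c * x ^ 2"
  shows "0 \<le> level_sum i G k" "level_sum i G k \<le> c * pmax ^ k"
proof -
  show "0 \<le> level_sum i G k"
    using assms pmax_power_le_1 by (intro level_sum_nonneg) (auto intro: order_trans)
  have "0 \<le> c" using assms(2)[of 1] by simp
  have "level_sum i G k \<le> level_sum i (\<lambda>x. (c * pmax ^ k) * x) k"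
  proof (rule level_sum_mono[OF assms(1)])
    fix x :: real assume x: "0 < x" "x \<le> pmax ^ k"
    then have "G x \<le> c * x ^ 2" using assms(2) pmax_power_le_1 by (meson order_trans)
    also have "\<dots> \<le> c * (pmax ^ k * x)"
      using x \<open>0 \<le> c\<close> by (intro mult_left_mono) (auto simp: power2_eq_square)
    finally show "G x \<le> (c * pmax ^ k) * x" by (simp add: algebra_simps)
  qed
  then show "level_sum i G k \<le> c * pmax ^ k" using level_sum_linear[OF assms(1)] by simp
qed

lemma summable_level_sum:
  assumes "i \<in> {0,1}" "\<And>x. 0 < x \<Longrightarrow> x \<le> 1 \<Longrightarrow> 0 \<le> G x \<and> G x \<le> c * x ^ 2"
  shows "summable (\<lambda>k. level_sum i G k)"
proof (rule summable_comparison_test'[where N = 0])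
  show "summable (\<lambda>k. c * pmax ^ k)" using pmax_bounds by (intro summable_mult summable_geometric) auto
  show "norm (level_sum i G k) \<le> c * pmax ^ k" for k
    using level_sum_le_geometric[OF assms] by simp
qed

lemma level_sum_eventually_zero:
  assumes "i \<in> {0,1}" "pmax ^ K < t" "K \<le> k" "\<And>x. x < t \<Longrightarrow> G x = 0"
  shows "level_sum i G k = 0"
proof -
  have "pmax ^ k \<le> pmax ^ K" using assms pmax_bounds by (intro power_decreasing) auto
  then have "level_sum i G k = level_sum i (\<lambda>_. 0) k" using assms by (intro level_sum_cong) auto
  then show ?thesis by (simp add: level_sum_zero)
qed

lemma level_series_eq_upto:
  assumes "i \<in> {0,1}" "pmax ^ K < t" "\<And>x. x < t \<Longrightarrow> G x = 0"
  shows "summable (\<lambda>k. level_sum i G k)" "(\<Sum>k. level_sum i G k) = level_sum_upto i G K"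
proof -
  have zero: "level_sum i G k = 0" if "k \<notin> {..<K}" for k
    using level_sum_eventually_zero[OF assms(1,2) _ assms(3)] that by auto
  show "summable (\<lambda>k. level_sum i G k)" by (rule summable_finite[of "{..<K}"]) (use zero in auto)
  show "(\<Sum>k. level_sum i G k) = level_sum_upto i G K"
    unfolding level_sum_upto_def by (rule suminf_finite) (use zero in auto)
qed

lemma level_sum_upto_0: "level_sum_upto i G 0 = 0"
  by (simp add: level_sum_upto_def)

lemma level_sum_upto_Suc:
  "level_sum_upto i G (Suc K) = G 1 + (\<Sum>a\<in>{0,1}. level_sum_upto a (\<lambda>x. G (p i a * x)) K)"
proof -
  have "level_sum_upto i G (Suc K) = level_sum i G 0 + (\<Sum>k<K. level_sum i G (Suc k))"
    unfolding level_sum_upto_def by (rule sum.lessThan_Suc_shift)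
  also have "(\<Sum>k<K. level_sum i G (Suc k)) = (\<Sum>a\<in>{0,1}. level_sum_upto a (\<lambda>x. G (p i a * x)) K)"
    unfolding level_sum_Suc level_sum_upto_def by (rule sum.swap)
  finally show ?thesis by (simp add: level_sum_0)
qed

lemma level_sum_upto_cmult: "level_sum_upto i (\<lambda>x. c * G x) K = c * level_sum_upto i G K"
  unfolding level_sum_upto_def level_sum_cmult by (simp add: sum_distrib_left)

lemma level_sum_upto_cong:
  assumes "i \<in> {0,1}" "\<And>x. 0 < x \<Longrightarrow> x \<le> 1 \<Longrightarrow> G x = G' x"
  shows "level_sum_upto i G K = level_sum_upto i G' K"
  unfolding level_sum_upto_def
  by (intro sum.cong refl level_sum_cong) (use assms pmax_power_le_1 in \<open>auto intro: order_trans\<close>)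

section \<open>Renewal estimates\<close>

definition count_const :: real where "count_const = max 2 (1 / pmin)"

lemma count_bound_recursion:
  assumes i: "i \<in> {0,1}" and t: "0 < t"
  defines "B \<equiv> \<lambda>s. if s \<le> 1 then count_const - s else 0"
  shows "t * (if t \<le> 1 then 1 else 0) + (\<Sum>a\<in>{0,1}. p i a * B (t / p i a)) \<le> B t"
proof -
  have pa: "0 < p i a" "pmin \<le> p i a" "p i a < 1" if "a \<in> {0,1}" for a
    using p_pos p_less_1 pmin_bounds i that by auto
  have "1 / pmin \<le> count_const" by (simp add: count_const_def)
  then have "1 \<le> pmin * count_const" using pmin_bounds(1) by (simp add: field_simps)
  moreover have "pmin * count_const \<le> p i a * count_const" if "a \<in> {0,1}" for a
    using pa[OF that] by (intro mult_right_mono) (auto simp: count_const_def)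
  ultimately have "1 \<le> p i 0 * count_const" "1 \<le> p i 1 * count_const" by fastforce+
  moreover have "p i a * B (t / p i a) = (if t \<le> p i a then p i a * count_const - t else 0)"
    if "a \<in> {0,1}" for a
    unfolding B_def using pa[OF that] by (auto simp: field_simps)
  moreover have "p i 0 * count_const + p i 1 * count_const = count_const"
    using p_row_sum[OF i] by (metis distrib_right mult_1)
  moreover have "2 \<le> count_const" by (simp add: count_const_def)
  ultimately show ?thesis using pa[of 0] pa[of 1] t by (simp add: B_def)
qed

text \<open>The number of words of probability at least \<open>t\<close> is at most \<open>count_const / t\<close>; the
  sharper bound \<open>count_const - t\<close> for \<open>t\<close> times that number is what makes the induction close.\<close>

lemma level_sum_upto_count_le:
  assumes "i \<in> {0,1}" "0 < t"
  shows "t * level_sum_upto i (\<lambda>x. if t \<le> x then 1 else 0) K \<le> (if t \<le> 1 then count_const - t else 0)"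
  using assms
proof (induction K arbitrary: i t)
  case 0 then show ?case by (simp add: level_sum_upto_0 count_const_def max_def)
next
  case (Suc K)
  define B where "B = (\<lambda>s::real. if s \<le> 1 then count_const - s else 0)"
  define N where "N = (\<lambda>a s. level_sum_upto a (\<lambda>x. if s \<le> x then 1 else 0) K)"
  have pa: "0 < p i a" if "a \<in> {0,1}" for a using p_pos Suc.prems that by auto
  have scale: "(\<lambda>x. if t \<le> p i a * x then 1 else 0) = (\<lambda>x. if t / p i a \<le> x then 1 else (0::real))"
    if "a \<in> {0,1}" for a
    using pa[OF that] by (intro ext) (simp add: pos_divide_le_eq mult.commute)
  have IH: "p i a * ((t / p i a) * N a (t / p i a)) \<le> p i a * B (t / p i a)" if a: "a \<in> {0,1}" for a
    using Suc.IH[OF a, of "t / p i a"] pa[OF a] Suc.prems(2) unfolding B_def N_def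
    by (intro mult_left_mono) auto
  have "t * level_sum_upto i (\<lambda>x. if t \<le> x then 1 else 0) (Suc K) =
      t * (if t \<le> 1 then 1 else 0) + (\<Sum>a\<in>{0,1}. p i a * ((t / p i a) * N a (t / p i a)))"
    unfolding level_sum_upto_Suc N_def distrib_left sum_distrib_left
    using scale[of 0] scale[of "Suc 0"] pa[of 0] pa[of 1] by simp
  also have "\<dots> \<le> t * (if t \<le> 1 then 1 else 0) + (\<Sum>a\<in>{0,1}. p i a * B (t / p i a))"
    using IH by (intro add_left_mono sum_mono) auto
  also have "\<dots> \<le> B t"
    unfolding B_def by (rule count_bound_recursion[OF Suc.prems])
  finally show ?case unfolding B_def .
qed

definition square_const :: real where "square_const = 1 / (1 - pmax)"

lemma level_sum_upto_squares_le:
  assumes "i \<in> {0,1}" "0 < t"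
  shows "level_sum_upto i (\<lambda>x. if x < t then x ^ 2 else 0) K \<le> square_const * min t 1"
  using assms
proof (induction K arbitrary: i t)
  case 0 then show ?case using pmax_bounds by (simp add: level_sum_upto_0 square_const_def)
next
  case (Suc K)
  define S where "S = (\<lambda>a. level_sum_upto a (\<lambda>x. if x < t / p i a then x ^ 2 else 0) K)"
  have pa: "0 < p i a" "p i a \<le> pmax" if "a \<in> {0,1}" for a
    using p_pos pmax_bounds Suc.prems that by auto
  have scale: "(\<lambda>x. if p i a * x < t then (p i a * x) ^ 2 else 0) =
      (\<lambda>x. (p i a) ^ 2 * (if x < t / p i a then x ^ 2 else 0))" if "a \<in> {0,1}" for a
    using pa[OF that] by (auto intro!: ext simp: pos_less_divide_eq power_mult_distrib mult.commute)
  have eq: "level_sum_upto i (\<lambda>x. if x < t then x ^ 2 else 0) (Suc K) =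
      (if 1 < t then 1 else 0) + (\<Sum>a\<in>{0,1}. (p i a) ^ 2 * S a)"
    unfolding level_sum_upto_Suc S_def using scale[of 0] scale[of "Suc 0"] by (simp add: level_sum_upto_cmult)
  have const: "1 + square_const * pmax = square_const" "0 < square_const"
    using pmax_bounds by (auto simp: square_const_def field_simps)
  have each: "(p i a) ^ 2 * S a \<le> square_const * p i a * t \<and>
      (p i a) ^ 2 * S a \<le> square_const * pmax * p i a" if a: "a \<in> {0,1}" for a
  proof -
    have "(p i a) ^ 2 * S a \<le> (p i a) ^ 2 * (square_const * min (t / p i a) 1)"
      using Suc.IH[OF a, of "t / p i a"] pa[OF a] Suc.prems unfolding S_def
      by (intro mult_left_mono) auto
    moreover have "(p i a) ^ 2 * (square_const * min (t / p i a) 1) \<le> square_const * p i a * t"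
    proof -
      have "(p i a) ^ 2 * (square_const * min (t / p i a) 1) \<le> (p i a) ^ 2 * (square_const * (t / p i a))"
        using const pa[OF a] by (intro mult_left_mono) auto
      also have "\<dots> = square_const * p i a * t" using pa[OF a] by (simp add: power2_eq_square field_simps)
      finally show ?thesis .
    qed
    moreover have "(p i a) ^ 2 * (square_const * min (t / p i a) 1) \<le> square_const * pmax * p i a"
    proof -
      have "(p i a) ^ 2 * (square_const * min (t / p i a) 1) \<le> (p i a * pmax) * square_const"
        using const pa[OF a] Suc.prems(2) by (intro mult_mono) (auto simp: power2_eq_square)
      then show ?thesis by (simp add: algebra_simps)
    qed
    ultimately show ?thesis by linarith
  qed
  have row: "c * p i 0 + c * p i 1 = c" for c
    using p_row_sum[OF Suc.prems(1)] by (metis distrib_left mult_1_right)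
  show ?case
    using each[of 0] each[of 1] row[of "square_const * pmax"] row[of "square_const * t"] const
    unfolding eq by (auto simp: algebra_simps min_def)
qed

abbreviation H :: real where "H \<equiv> entropy_rate p"

lemma row_entropy_pos: "i \<in> {0,1} \<Longrightarrow> 0 < row_entropy p i"
proof -
  assume i: "i \<in> {0,1}"
  have "p i j * ln (p i j) < 0" if "j \<in> {0,1}" for j
    using p_pos[OF i that] p_less_1[OF i that] by (simp add: mult_pos_neg)
  then have "p i 0 * ln (p i 0) + p i 1 * ln (p i 1) < 0" by (simp add: add_neg_neg)
  then show ?thesis by (simp add: row_entropy_def)
qed

lemma entropy_rate_mult_eq: "H * (p 0 1 + p 1 0) = p 1 0 * row_entropy p 0 + p 0 1 * row_entropy p 1"
proof -
  have "p 0 1 + p 1 0 > 0" using p_pos[of 0 1] p_pos[of 1 0] by simp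
  moreover have "H = (p 1 0 * row_entropy p 0 + p 0 1 * row_entropy p 1) / (p 0 1 + p 1 0)"
    unfolding entropy_rate_def stat0_def stat1_def by (simp add: add_divide_distrib)
  ultimately show ?thesis by simp
qed

lemma entropy_rate_pos: "0 < H"
proof -
  have "0 < p 1 0 * row_entropy p 0 + p 0 1 * row_entropy p 1"
    using row_entropy_pos[of 0] row_entropy_pos[of 1] p_pos[of 1 0] p_pos[of 0 1]
    by (intro add_pos_pos mult_pos_pos) auto
  moreover have "p 0 1 + p 1 0 > 0" using p_pos[of 0 1] p_pos[of 1 0] by simp
  ultimately show ?thesis using entropy_rate_mult_eq by (metis zero_less_mult_pos2)
qed

text \<open>The offsets solve \<open>h\<^sub>i = 1 - H\<^sub>i / H + p\<^sub>i\<^sub>0 h\<^sub>0 + p\<^sub>i\<^sub>1 h\<^sub>1\<close>, normalised by \<open>h\<^sub>1 = 0\<close>; this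
  singular system is consistent because \<open>H\<close> is the stationary mean of the row entropies.\<close>

definition poisson_offset :: "nat \<Rightarrow> real" where
  "poisson_offset i = (if i = 0 then (1 - row_entropy p 0 / H) / p 0 1 else 0)"

definition poisson_sol :: "nat \<Rightarrow> real \<Rightarrow> real" where
  "poisson_sol i t = - ln t / H + poisson_offset i"

lemma poisson_offset_equation:
  assumes "i \<in> {0,1}"
  shows "1 - row_entropy p i / H + p i 0 * poisson_offset 0 = poisson_offset i"
proof (cases "i = 0")
  case True
  have "p 0 1 * poisson_offset 0 = 1 - row_entropy p 0 / H"
    using p_pos[of 0 1] by (simp add: poisson_offset_def)
  moreover have p00: "p 0 0 = 1 - p 0 1" using p_row_sum[of 0] by simp
  ultimately show ?thesis unfolding True p00 by (simp add: algebra_simps)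
next
  case False
  then have "i = 1" using assms by auto
  moreover have "1 - row_entropy p 1 / H + p 1 0 * ((1 - row_entropy p 0 / H) / p 0 1) = 0"
    using entropy_rate_mult_eq entropy_rate_pos p_pos[of 0 1] by (simp add: field_simps) (metis distrib_left)
  ultimately show ?thesis by (simp add: poisson_offset_def)
qed

lemma poisson_sol_equation:
  assumes i: "i \<in> {0,1}" and t: "0 < t"
  shows "1 + (\<Sum>a\<in>{0,1}. p i a * poisson_sol a (t / p i a)) = poisson_sol i t"
proof -
  have ln: "ln (t / p i a) = ln t - ln (p i a)" if "a \<in> {0,1}" for a
    using p_pos[OF i that] t by (simp add: ln_div)
  have "1 + (\<Sum>a\<in>{0,1}. p i a * poisson_sol a (t / p i a))
      = 1 + (p i 0 * (- (ln t - ln (p i 0)) / H + poisson_offset 0)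
             + p i 1 * (- (ln t - ln (p i 1)) / H + poisson_offset 1))"
    using entropy_rate_pos by (simp add: poisson_sol_def ln[of 0] ln[of "Suc 0"]) (simp add: field_simps)
  also have "\<dots> = - ln t / H * (p i 0 + p i 1) + (1 - row_entropy p i / H + p i 0 * poisson_offset 0)"
    using entropy_rate_pos by (simp add: row_entropy_def poisson_offset_def field_simps)
  also have "\<dots> = poisson_sol i t"
    using p_row_sum[OF i] poisson_offset_equation[OF i] by (simp add: poisson_sol_def)
  finally show ?thesis .
qed

definition poisson_const :: real where
  "poisson_const = ln (1 / pmin) / H + \<bar>poisson_offset 0\<bar>"

lemma abs_poisson_offset_le: "\<bar>poisson_offset i\<bar> \<le> \<bar>poisson_offset 0\<bar>"
  by (simp add: poisson_offset_def)

lemma abs_poisson_sol_le: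
  assumes "1 < t" "t \<le> 1 / pmin"
  shows "\<bar>poisson_sol i t\<bar> \<le> poisson_const"
proof -
  have "0 < ln t" using assms by simp
  moreover have "ln t \<le> ln (1 / pmin)" using assms pmin_bounds(1) by simp
  ultimately have "\<bar>- ln t / H\<bar> \<le> ln (1 / pmin) / H"
    using entropy_rate_pos by (simp add: divide_right_mono)
  then show ?thesis using abs_poisson_offset_le[of i] unfolding poisson_sol_def poisson_const_def by linarith
qed

text \<open>For \<open>t > 1\<close> both terms are bounded directly; for \<open>t \<le> 1\<close> one step of the recursion
  only reaches \<open>t / p i a \<le> 1 / pmin\<close>, and \<open>pmax ^ K < t\<close> makes all levels from \<open>K\<close> on vanish.\<close>

lemma level_sum_upto_large_approx:
  assumes "i \<in> {0,1}" "pmax ^ K < t" "t \<le> 1 / pmin"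
  shows "\<bar>level_sum_upto i (\<lambda>x. if t \<le> x then x else 0) K - poisson_sol i t\<bar> \<le> poisson_const"
  using assms
proof (induction K arbitrary: i t)
  case 0
  have "level_sum_upto i (\<lambda>x. if t \<le> x then x else 0) 0 = 0" by (rule level_sum_upto_0)
  then show ?case using 0 abs_poisson_sol_le by simp
next
  case (Suc K)
  define U where "U = (\<lambda>a s. level_sum_upto a (\<lambda>x. if s \<le> x then x else 0) K)"
  show ?case
  proof (cases "1 < t")
    case True
    then have "level_sum_upto i (\<lambda>x. if t \<le> x then x else 0) (Suc K) = level_sum_upto i (\<lambda>_. 0) (Suc K)"
      using Suc.prems by (intro level_sum_upto_cong) auto
    then show ?thesis using True Suc.prems abs_poisson_sol_le
      by (simp add: level_sum_upto_def level_sum_zero)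
  next
    case False
    have t0: "0 < t" using Suc.prems(2) pmax_bounds by (meson less_trans zero_less_power)
    have pa: "0 < p i a" "pmin \<le> p i a" "p i a \<le> pmax" if "a \<in> {0,1}" for a
      using p_pos pmin_bounds pmax_bounds Suc.prems that by auto
    have scale: "(\<lambda>x. if t \<le> p i a * x then p i a * x else 0) = (\<lambda>x. p i a * (if t / p i a \<le> x then x else 0))"
      if "a \<in> {0,1}" for a
      using pa[OF that] by (auto intro!: ext simp: pos_divide_le_eq mult.commute)
    have "level_sum_upto i (\<lambda>x. if t \<le> x then x else 0) (Suc K) - poisson_sol i t =
       (\<Sum>a\<in>{0,1}. p i a * (U a (t / p i a) - poisson_sol a (t / p i a)))"
      unfolding level_sum_upto_Suc poisson_sol_equation[OF Suc.prems(1) t0, symmetric] U_def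
      using scale[of 0] scale[of "Suc 0"] False by (simp add: level_sum_upto_cmult algebra_simps)
    also have "\<bar>\<dots>\<bar> \<le> (\<Sum>a\<in>{0,1}. p i a * poisson_const)"
    proof (intro order_trans[OF sum_abs] sum_mono)
      fix a :: nat assume a: "a \<in> {0,1}"
      have "pmax ^ K * p i a \<le> pmax ^ K * pmax" using pa[OF a] pmax_bounds by (intro mult_left_mono) auto
      then have "pmax ^ K * p i a < t" using Suc.prems(2) by (simp add: mult.commute)
      then have "pmax ^ K < t / p i a" using pa[OF a] by (simp add: pos_less_divide_eq)
      moreover have "t / p i a \<le> 1 / pmin"
        using False pa[OF a] pmin_bounds by (meson frac_le less_eq_real_def not_less zero_le_one)
      ultimately have "\<bar>U a (t / p i a) - poisson_sol a (t / p i a)\<bar> \<le> poisson_const"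
        unfolding U_def by (rule Suc.IH[OF a])
      then show "\<bar>p i a * (U a (t / p i a) - poisson_sol a (t / p i a))\<bar> \<le> p i a * poisson_const"
        using pa[OF a] by (simp add: abs_mult)
    qed
    also have "\<dots> = poisson_const" using p_row_sum Suc.prems by (simp add: distrib_right[symmetric])
    finally show ?thesis .
  qed
qed

lemma level_sum_share_increment_error_le:
  assumes i: "i \<in> {0,1}" and n: "1 \<le> n"
  defines "t \<equiv> 1 / real n"
  shows "\<bar>level_sum i (\<lambda>x. share_increment n x - (if t \<le> x then x else 0)) k\<bar>
    \<le> 648 / real n * level_sum i (\<lambda>x. if t \<le> x then 1 else 0) k
      + 4 * real n * level_sum i (\<lambda>x. if x < t then x ^ 2 else 0) k"
proof -
  have "\<bar>level_sum i (\<lambda>x. share_increment n x - (if t \<le> x then x else 0)) k\<bar>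
    \<le> level_sum i (\<lambda>x. \<bar>share_increment n x - (if t \<le> x then x else 0)\<bar>) k"
    by (rule level_sum_abs_le)
  also have "\<dots> \<le> level_sum i (\<lambda>x. 648 / real n * (if t \<le> x then 1 else 0) + 4 * real n * (if x < t then x ^ 2 else 0)) k"
  proof (rule level_sum_mono[OF i])
    fix x :: real assume x: "0 < x" "x \<le> pmax ^ k"
    then have "x \<le> 1" using pmax_power_le_1 by (meson order_trans)
    then show "\<bar>share_increment n x - (if t \<le> x then x else 0)\<bar>
      \<le> 648 / real n * (if t \<le> x then 1 else 0) + 4 * real n * (if x < t then x ^ 2 else 0)"
      using share_increment_large[OF n, of x] share_increment_nonneg[of x n] share_increment_le_square[OF n, of x] x
      by (auto simp: t_def)
  qed
  also have "\<dots> = 648 / real n * level_sum i (\<lambda>x. if t \<le> x then 1 else 0) k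
      + 4 * real n * level_sum i (\<lambda>x. if x < t then x ^ 2 else 0) k"
    by (simp only: level_sum_add level_sum_cmult)
  finally show ?thesis .
qed

lemma level_series_share_increment_error:
  assumes i: "i \<in> {0,1}" and n: "1 \<le> n"
  defines "t \<equiv> 1 / real n"
  defines "e \<equiv> \<lambda>k. level_sum i (\<lambda>x. share_increment n x - (if t \<le> x then x else 0)) k"
  shows "summable e" "\<bar>\<Sum>k. e k\<bar> \<le> 648 * count_const + 4 * square_const"
proof -
  have t: "0 < t" "t \<le> 1" using n by (auto simp: t_def)
  obtain K where K: "pmax ^ K < t" using real_arch_pow_inv[OF t(1) pmax_bounds(2)] by auto
  define c where "c = (\<lambda>k. level_sum i (\<lambda>x. if t \<le> x then 1 else 0) k)"
  define s where "s = (\<lambda>k. level_sum i (\<lambda>x. if x < t then x ^ 2 else 0) k)"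
  have c: "summable c" "(\<Sum>k. c k) = level_sum_upto i (\<lambda>x. if t \<le> x then 1 else 0) K"
    using level_series_eq_upto[OF i K, of "\<lambda>x. if t \<le> x then 1 else 0"] by (auto simp: c_def)
  have "(\<Sum>k. c k) \<le> count_const / t"
    using level_sum_upto_count_le[OF i t(1), of K] t c(2) by (simp add: field_simps)
  have s_partial: "(\<Sum>k<K'. s k) \<le> square_const * t" for K'
    using level_sum_upto_squares_le[OF i t(1), of K'] t unfolding level_sum_upto_def s_def by simp
  have s_nonneg: "0 \<le> s k" for k using i unfolding s_def by (intro level_sum_nonneg) auto
  have s: "summable s" by (rule summableI_nonneg_bounded[OF s_nonneg s_partial])
  have "(\<Sum>k. s k) \<le> square_const * t" by (rule suminf_le_const[OF s s_partial])
  define b where "b = (\<lambda>k. 648 / real n * c k + 4 * real n * s k)"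
  have b: "summable b" unfolding b_def using c s by (intro summable_add summable_mult)
  have eb: "\<bar>e k\<bar> \<le> b k" for k
    unfolding e_def b_def c_def s_def t_def using level_sum_share_increment_error_le[OF i n] by simp
  have abs_e: "summable (\<lambda>k. \<bar>e k\<bar>)" by (rule summable_comparison_test'[OF b]) (use eb in simp)
  show "summable e" by (rule summable_comparison_test'[OF b]) (use eb in simp)
  have "\<bar>\<Sum>k. e k\<bar> \<le> (\<Sum>k. b k)"
    using summable_rabs[OF abs_e] suminf_le[OF eb abs_e b] by linarith
  also have "\<dots> = 648 / real n * (\<Sum>k. c k) + 4 * real n * (\<Sum>k. s k)"
    unfolding b_def using c(1) s by (simp only: suminf_add[symmetric] suminf_mult summable_mult)
  also have "\<dots> \<le> 648 / real n * (count_const / t) + 4 * real n * (square_const * t)"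
    using \<open>(\<Sum>k. c k) \<le> count_const / t\<close> \<open>(\<Sum>k. s k) \<le> square_const * t\<close> n
    by (intro add_mono mult_left_mono) auto
  also have "\<dots> = 648 * count_const + 4 * square_const" using n by (simp add: t_def)
  finally show "\<bar>\<Sum>k. e k\<bar> \<le> 648 * count_const + 4 * square_const" .
qed

definition increment_const :: real where
  "increment_const = 648 * count_const + 4 * square_const + poisson_const + \<bar>poisson_offset 0\<bar>"

text \<open>The main part of \<open>share_increment n x\<close> is \<open>x [x \<ge> 1/n]\<close>, whose level series is
  approximated by \<open>poisson_sol i (1/n) = ln n / H + poisson_offset i\<close>.\<close>

lemma level_series_share_increment:
  assumes i: "i \<in> {0,1}" and n: "1 \<le> n"
  shows "\<bar>(\<Sum>k. level_sum i (share_increment n) k) - ln (real n) / H\<bar> \<le> increment_const"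
proof -
  define t where "t = 1 / real n"
  have t: "0 < t" "t \<le> 1" using n by (auto simp: t_def)
  obtain K where K: "pmax ^ K < t" using real_arch_pow_inv[OF t(1) pmax_bounds(2)] by auto
  define g where "g = (\<lambda>x::real. if t \<le> x then x else 0)"
  define e where "e = (\<lambda>k. level_sum i (\<lambda>x. share_increment n x - g x) k)"
  have g: "summable (\<lambda>k. level_sum i g k)" "(\<Sum>k. level_sum i g k) = level_sum_upto i g K"
    using level_series_eq_upto[OF i K, of g] by (auto simp: g_def)
  have e: "summable e" "\<bar>\<Sum>k. e k\<bar> \<le> 648 * count_const + 4 * square_const"
    using level_series_share_increment_error[OF i n] unfolding e_def g_def t_def by auto
  have split: "level_sum i (share_increment n) k = level_sum i g k + e k" for k
    by (simp add: e_def level_sum_add[symmetric])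
  have sum_eq: "(\<Sum>k. level_sum i (share_increment n) k) = level_sum_upto i g K + (\<Sum>k. e k)"
    unfolding split suminf_add[OF g(1) e(1), symmetric] g(2) ..
  have "t \<le> 1 / pmin" using t pmin_bounds by (simp add: le_divide_eq_1_pos order_trans[of _ 1])
  then have "\<bar>level_sum_upto i g K - poisson_sol i t\<bar> \<le> poisson_const"
    using level_sum_upto_large_approx[OF i K] unfolding g_def by blast
  moreover have "poisson_sol i t = ln (real n) / H + poisson_offset i"
    using n by (simp add: poisson_sol_def t_def ln_div)
  ultimately show ?thesis
    using e(2) abs_poisson_offset_le[of i] unfolding sum_eq increment_const_def by linarith
qed

definition expected_ops :: "nat \<Rightarrow> nat \<Rightarrow> real" where
  "expected_ops i n = (\<Sum>k. level_sum i (\<lambda>x. real n * share_prob n x) k)"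

lemma level_sum_share_prob_bounds:
  assumes "i \<in> {0,1}"
  shows "0 \<le> level_sum i (share_prob n) k" "level_sum i (share_prob n) k \<le> real n * pmax ^ k"
  using level_sum_le_geometric[OF assms, of "share_prob n" "real n"] share_prob_bounds by auto

lemma summable_level_sum_share_prob:
  "i \<in> {0,1} \<Longrightarrow> summable (\<lambda>k. level_sum i (share_prob n) k)"
  using summable_level_sum[of i "share_prob n" "real n"] share_prob_bounds by auto

lemma expected_ops_0: "expected_ops i 0 = 0"
  by (simp add: expected_ops_def level_sum_zero)

lemma expected_ops_1: "expected_ops i (Suc 0) = 0"
  by (simp add: expected_ops_def share_prob_def level_sum_zero)

lemma expected_ops_Suc_diff:
  assumes i: "i \<in> {0,1}" and n: "1 \<le> n"
  shows "expected_ops i (Suc n) - expected_ops i n = (\<Sum>k. level_sum i (share_increment n) k)"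
proof -
  have summable: "summable (\<lambda>k. level_sum i (\<lambda>x. real m * share_prob m x) k)" for m
    unfolding level_sum_cmult by (intro summable_mult summable_level_sum_share_prob[OF i])
  have "expected_ops i (Suc n) - expected_ops i n =
      (\<Sum>k. level_sum i (\<lambda>x. real (Suc n) * share_prob (Suc n) x - real n * share_prob n x) k)"
    unfolding expected_ops_def level_sum_diff by (rule suminf_diff[OF summable summable])
  also have "\<dots> = (\<Sum>k. level_sum i (share_increment n) k)"
    using share_increment_eq[OF n] by simp
  finally show ?thesis .
qed

definition lipschitz_const :: real where "lipschitz_const = increment_const + 2 / H"

lemma lipschitz_const_pos: "0 < lipschitz_const"
proof -
  have "0 \<le> poisson_const" unfolding poisson_const_def
    using entropy_rate_pos pmin_bounds by (intro add_nonneg_nonneg divide_nonneg_pos) auto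
  moreover have "0 < count_const" "0 < square_const" "0 < 2 / H"
    using pmax_bounds entropy_rate_pos by (auto simp: count_const_def square_const_def)
  ultimately show ?thesis
    unfolding lipschitz_const_def increment_const_def using abs_ge_zero[of "poisson_offset 0"] by linarith
qed

lemma expected_ops_deviation_step:
  assumes i: "i \<in> {0,1}"
  shows "\<bar>(expected_ops i (Suc n) - nlogn (Suc n) / H) - (expected_ops i n - nlogn n / H)\<bar> \<le> lipschitz_const"
proof (cases "n = 0")
  case True
  then show ?thesis using lipschitz_const_pos by (simp add: expected_ops_0 expected_ops_1 nlogn_def)
next
  case False
  then have n: "1 \<le> n" by simp
  have "\<bar>(expected_ops i (Suc n) - expected_ops i n) - ln (real n) / H\<bar> \<le> increment_const"
    using level_series_share_increment[OF i n] expected_ops_Suc_diff[OF i n] by simp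
  moreover have "\<bar>(nlogn (Suc n) - nlogn n - ln (real n)) / H\<bar> \<le> 2 / H"
    using nlogn_Suc_minus_ln[OF n] entropy_rate_pos by (simp add: divide_right_mono)
  moreover have "(expected_ops i (Suc n) - nlogn (Suc n) / H) - (expected_ops i n - nlogn n / H) =
      ((expected_ops i (Suc n) - expected_ops i n) - ln (real n) / H)
      - (nlogn (Suc n) - nlogn n - ln (real n)) / H"
    by (simp add: diff_divide_distrib)
  ultimately show ?thesis unfolding lipschitz_const_def by linarith
qed

end

section \<open>The expected number of bucket operations\<close>

locale markov_source_strings = binary_transition_matrix p for p :: "nat \<Rightarrow> nat \<Rightarrow> real" +
  fixes M :: "'a measure" and xi :: "nat \<Rightarrow> 'a \<Rightarrow> nat \<Rightarrow> nat" and i :: nat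
  assumes source: "markov_strings M xi (p i) p" and i: "i \<in> {0,1}"
begin

sublocale prob_space M
  using source by (simp add: markov_strings_def)

abbreviation strings_space :: "(nat \<Rightarrow> nat) measure" where
  "strings_space \<equiv> Pi\<^sub>M UNIV (\<lambda>_. count_space UNIV)"

lemma indep_strings: "indep_vars (\<lambda>_. strings_space) xi UNIV"
  using source by (simp add: markov_strings_def)

lemma measurable_string: "xi l \<in> M \<rightarrow>\<^sub>M strings_space"
  using indep_strings by (simp add: indep_vars_def)

lemma measurable_symbol[measurable]: "(\<lambda>\<omega>. xi l \<omega> t) \<in> M \<rightarrow>\<^sub>M count_space UNIV"
  using measurable_compose[OF measurable_string measurable_component_singleton[of t UNIV]] by simp

definition prefix_event :: "nat \<Rightarrow> nat list \<Rightarrow> 'a set" where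
  "prefix_event l w = {\<omega> \<in> space M. \<forall>t<length w. xi l \<omega> t = w ! t}"

definition shared_event :: "nat \<Rightarrow> nat \<Rightarrow> nat \<Rightarrow> 'a set" where
  "shared_event n j k = {\<omega> \<in> space M. \<exists>l<n. l \<noteq> j \<and> (\<forall>t<k. xi l \<omega> t = xi j \<omega> t)}"

lemma prefix_event_sets[measurable]: "prefix_event l w \<in> sets M"
proof -
  have "{\<omega> \<in> space M. \<forall>t<length w. xi l \<omega> t = w ! t} \<in> sets M" by measurable
  then show ?thesis unfolding prefix_event_def .
qed

lemma shared_event_sets[measurable]: "shared_event n j k \<in> sets M"
proof -
  have "{\<omega> \<in> space M. xi l \<omega> t = v} \<in> sets M" for l t v by measurable
  moreover have "{\<omega> \<in> space M. xi l \<omega> t = xi j \<omega> t}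
      = (\<Union>v. {\<omega> \<in> space M. xi l \<omega> t = v} \<inter> {\<omega> \<in> space M. xi j \<omega> t = v})" for l t
    by auto
  ultimately have agree: "{\<omega> \<in> space M. xi l \<omega> t = xi j \<omega> t} \<in> sets M" for l t
    by (auto intro!: sets.countable_UN)
  have "shared_event n j k = (\<Union>l\<in>{..<n} - {j}. space M -
      (\<Union>t<k. space M - {\<omega> \<in> space M. xi l \<omega> t = xi j \<omega> t}))"
    unfolding shared_event_def by auto
  then show ?thesis by (simp only:) (intro sets.finite_UN sets.Diff sets.top agree finite_Diff finite_lessThan)
qed

lemma prob_prefix_event:
  assumes "w \<in> words k"
  shows "prob (prefix_event l w) = prefix_prob i w"
proof -
  have "\<forall>j w. set w \<subseteq> {0, 1} \<longrightarrow> prob {\<omega> \<in> space M. \<forall>t<length w. xi j \<omega> t = w ! t} = word_prob (p i) p w"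
    using source by (simp add: markov_strings_def)
  then show ?thesis using assms unfolding prefix_event_def prefix_prob_def words_def by blast
qed

lemma disjoint_prefix_events:
  assumes "w \<in> words k" "w' \<in> words k" "w \<noteq> w'"
  shows "prefix_event l w \<inter> prefix_event l w' = {}"
proof -
  have "w = w'" if "\<omega> \<in> prefix_event l w" "\<omega> \<in> prefix_event l w'" for \<omega>
    using assms that unfolding prefix_event_def words_def by (auto intro: nth_equalityI)
  then show ?thesis using assms(3) by blast
qed

lemma prob_Union_prefix_events: "prob (\<Union>w\<in>words k. prefix_event l w) = 1"
proof -
  have "prob (\<Union>w\<in>words k. prefix_event l w) = (\<Sum>w\<in>words k. prob (prefix_event l w))"
    by (rule finite_measure_finite_Union)
      (auto simp: finite_words disjoint_family_on_def disjoint_prefix_events)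
  also have "\<dots> = level_sum i (\<lambda>x. 1 * x) k"
    unfolding level_sum_def by (rule sum.cong) (auto simp: prob_prefix_event)
  also have "\<dots> = 1" by (rule level_sum_linear[OF i])
  finally show ?thesis .
qed

lemma prob_prefix_event_unshared:
  assumes w: "w \<in> words k" and L: "j \<notin> L" "finite L"
  shows "prob (prefix_event j w \<inter> (\<Inter>l\<in>L. space M - prefix_event l w))
    = prefix_prob i w * (1 - prefix_prob i w) ^ card L"
proof -
  define S where "S = {f \<in> space strings_space. \<forall>t<length w. f t = w ! t}"
  have S: "S \<in> sets strings_space"
    unfolding S_def by measurable
  have pre: "prefix_event l w = xi l -` S \<inter> space M"
    "space M - prefix_event l w = xi l -` (space strings_space - S) \<inter> space M" for l
    using measurable_space[OF measurable_string[of l]] unfolding prefix_event_def S_def by auto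
  define B where "B l = (if l = j then prefix_event j w else space M - prefix_event l w)" for l
  have "B l \<in> {xi l -` X \<inter> space M | X. X \<in> sets strings_space}" for l
  proof (cases "l = j")
    case True then show ?thesis using S unfolding B_def pre(1) by auto
  next
    case False then show ?thesis using sets.compl_sets[OF S] unfolding B_def pre(2) by auto
  qed
  then have "prob (\<Inter>l\<in>insert j L. B l) = (\<Prod>l\<in>insert j L. prob (B l))"
    using indep_strings L unfolding indep_vars_def2 by (intro indep_setsD) auto
  also have "\<dots> = prob (prefix_event j w) * (\<Prod>l\<in>L. prob (space M - prefix_event l w))"
  proof -
    have "(\<Prod>l\<in>L. prob (B l)) = (\<Prod>l\<in>L. prob (space M - prefix_event l w))"
      by (rule prod.cong) (use L in \<open>auto simp: B_def\<close>)
    then show ?thesis unfolding prod.insert[OF L(2,1)] by (simp add: B_def)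
  qed
  also have "\<dots> = prefix_prob i w * (1 - prefix_prob i w) ^ card L"
    using prob_prefix_event[OF w] prob_compl[OF prefix_event_sets] by simp
  moreover have "(\<Inter>l\<in>insert j L. B l) = prefix_event j w \<inter> (\<Inter>l\<in>L. space M - prefix_event l w)"
    using L by (auto simp: B_def)
  ultimately show ?thesis by simp
qed

lemma prob_prefix_event_shared:
  assumes w: "w \<in> words k" and j: "j < n"
  shows "prob (prefix_event j w \<inter> shared_event n j k) = share_prob n (prefix_prob i w)"
proof -
  define L where "L = {..<n} - {j}"
  have L: "j \<notin> L" "finite L" "card L = n - 1" using j by (auto simp: L_def)
  define U where "U = prefix_event j w \<inter> (\<Inter>l\<in>L. space M - prefix_event l w)"
  have "prefix_event j w \<inter> shared_event n j k = prefix_event j w - U"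
    using w unfolding U_def L_def prefix_event_def shared_event_def words_def by auto
  moreover have "U \<in> sets M" "U \<subseteq> prefix_event j w"
    unfolding U_def using L by auto
  ultimately have "prob (prefix_event j w \<inter> shared_event n j k) = prob (prefix_event j w) - prob U"
    by (simp add: finite_measure_Diff)
  also have "\<dots> = prefix_prob i w - prefix_prob i w * (1 - prefix_prob i w) ^ (n - 1)"
    unfolding U_def prob_prefix_event_unshared[OF w L(1,2)] prob_prefix_event[OF w] L(3) ..
  finally show ?thesis by (simp add: share_prob_def algebra_simps)
qed

lemma prob_shared_event:
  assumes j: "j < n"
  shows "prob (shared_event n j k) = level_sum i (share_prob n) k"
proof -
  define G where "G = (\<Union>w\<in>words k. prefix_event j w)"
  have "G \<in> sets M" unfolding G_def by (intro sets.finite_UN finite_words prefix_event_sets)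
  moreover have "AE \<omega> in M. \<omega> \<in> G"
    using AE_prob_1 prob_Union_prefix_events unfolding G_def by blast
  ultimately have "prob (shared_event n j k) = prob (\<Union>w\<in>words k. prefix_event j w \<inter> shared_event n j k)"
    unfolding G_def by (intro finite_measure_eq_AE) auto
  also have "\<dots> = (\<Sum>w\<in>words k. prob (prefix_event j w \<inter> shared_event n j k))"
    by (rule finite_measure_finite_Union)
      (auto simp: finite_words disjoint_family_on_def dest: disjoint_prefix_events)
  also have "\<dots> = level_sum i (share_prob n) k"
    unfolding level_sum_def by (rule sum.cong) (auto simp: prob_prefix_event_shared j)
  finally show ?thesis .
qed

text \<open>Strings are never prefixes of one another almost surely, so the \<open>LEAST\<close> in \<open>depth\<close> is
  attained almost surely and the junk value \<open>0\<close> does not affect the expectation.\<close>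

lemma AE_eventually_unshared: "j < n \<Longrightarrow> AE \<omega> in M. \<exists>K. \<omega> \<notin> shared_event n j K"
proof -
  assume j: "j < n"
  define N where "N = (\<Inter>K. shared_event n j K)"
  have "prob N \<le> real n * pmax ^ K" for K
  proof -
    have "prob N \<le> prob (shared_event n j K)" unfolding N_def by (intro finite_measure_mono) auto
    then show ?thesis using prob_shared_event[OF j, of K] level_sum_share_prob_bounds(2)[OF i, of n K] by linarith
  qed
  moreover have "(\<lambda>K. real n * pmax ^ K) \<longlonglongrightarrow> 0"
    using pmax_bounds by (intro tendsto_mult_right_zero LIMSEQ_power_zero) auto
  ultimately have "prob N \<le> 0" by (intro LIMSEQ_le_const[where X = "\<lambda>K. real n * pmax ^ K"]) auto
  moreover have "N \<in> sets M" unfolding N_def by auto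
  ultimately have "N \<in> null_sets M" by (simp add: emeasure_eq_measure null_sets_def measure_le_0_iff)
  then show ?thesis by (rule AE_I') (auto simp: N_def)
qed

lemma depth_iff_unshared:
  "\<omega> \<in> space M \<Longrightarrow> (\<forall>l<n. l \<noteq> j \<longrightarrow> (\<exists>t<k. xi l \<omega> t \<noteq> xi j \<omega> t)) \<longleftrightarrow> \<omega> \<notin> shared_event n j k"
  unfolding shared_event_def by auto

lemma measurable_depth: "(\<lambda>\<omega>. depth (\<lambda>l. xi l \<omega>) n j) \<in> M \<rightarrow>\<^sub>M count_space UNIV"
  unfolding depth_def
proof (rule measurable_Least)
  fix k
  have "{\<omega> \<in> space M. \<forall>l<n. l \<noteq> j \<longrightarrow> (\<exists>t<k. xi l \<omega> t \<noteq> xi j \<omega> t)} = space M - shared_event n j k"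
    unfolding shared_event_def by auto
  then show "Measurable.pred M (\<lambda>\<omega>. \<forall>l<n. l \<noteq> j \<longrightarrow> (\<exists>t<k. xi l \<omega> t \<noteq> xi j \<omega> t))"
    unfolding pred_def by simp
qed

lemma less_depth_iff_shared:
  assumes \<omega>: "\<omega> \<in> space M" and K: "\<omega> \<notin> shared_event n j K"
  shows "k < depth (\<lambda>l. xi l \<omega>) n j \<longleftrightarrow> \<omega> \<in> shared_event n j k"
proof -
  define P where "P = (\<lambda>k. \<forall>l<n. l \<noteq> j \<longrightarrow> (\<exists>t<k. xi l \<omega> t \<noteq> xi j \<omega> t))"
  have P: "P k \<longleftrightarrow> \<omega> \<notin> shared_event n j k" for k
    unfolding P_def using depth_iff_unshared[OF \<omega>] .
  have depth: "depth (\<lambda>l. xi l \<omega>) n j = (LEAST k. P k)" unfolding depth_def P_def ..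
  have "P (LEAST k. P k)" using K P by (intro LeastI) auto
  moreover have "P a \<Longrightarrow> a \<le> b \<Longrightarrow> P b" for a b unfolding P_def by (meson order_less_le_trans)
  ultimately have "(LEAST k. P k) \<le> k \<longleftrightarrow> P k"
    by (metis Least_le)
  then show ?thesis unfolding depth P by linarith
qed

lemma nn_integral_depth:
  assumes j: "j < n"
  shows "(\<integral>\<^sup>+\<omega>. real (depth (\<lambda>l. xi l \<omega>) n j) \<partial>M) = ennreal (\<Sum>k. level_sum i (share_prob n) k)"
proof -
  have "(\<integral>\<^sup>+\<omega>. real (depth (\<lambda>l. xi l \<omega>) n j) \<partial>M)
      = (\<Sum>k. emeasure M {\<omega> \<in> space M. k < depth (\<lambda>l. xi l \<omega>) n j})"
    using nn_integral_nat_function[OF measurable_depth] by (simp add: ennreal_of_nat_eq_real_of_nat)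
  also have "\<dots> = (\<Sum>k. ennreal (level_sum i (share_prob n) k))"
  proof (rule suminf_cong)
    fix k
    have "{\<omega> \<in> space M. k < depth (\<lambda>l. xi l \<omega>) n j} = (\<lambda>\<omega>. depth (\<lambda>l. xi l \<omega>) n j) -` {Suc k..} \<inter> space M"
      by auto
    then have "{\<omega> \<in> space M. k < depth (\<lambda>l. xi l \<omega>) n j} \<in> sets M"
      using measurable_sets[OF measurable_depth, of "{Suc k..}"] by simp
    moreover have "AE \<omega> in M. \<omega> \<in> {\<omega> \<in> space M. k < depth (\<lambda>l. xi l \<omega>) n j} \<longleftrightarrow> \<omega> \<in> shared_event n j k"
      using AE_eventually_unshared[OF j]
    proof (rule AE_mp, intro AE_I2 impI)
      fix \<omega> assume "\<omega> \<in> space M" "\<exists>K. \<omega> \<notin> shared_event n j K"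
      then show "\<omega> \<in> {\<omega> \<in> space M. k < depth (\<lambda>l. xi l \<omega>) n j} \<longleftrightarrow> \<omega> \<in> shared_event n j k"
        using less_depth_iff_shared by blast
    qed
    ultimately have "emeasure M {\<omega> \<in> space M. k < depth (\<lambda>l. xi l \<omega>) n j} = emeasure M (shared_event n j k)"
      by (intro emeasure_eq_AE) auto
    then show "emeasure M {\<omega> \<in> space M. k < depth (\<lambda>l. xi l \<omega>) n j} = ennreal (level_sum i (share_prob n) k)"
      using prob_shared_event[OF j] by (simp add: emeasure_eq_measure)
  qed
  also have "\<dots> = ennreal (\<Sum>k. level_sum i (share_prob n) k)"
    using level_sum_share_prob_bounds(1)[OF i] summable_level_sum_share_prob[OF i] by (rule suminf_ennreal2)
  finally show ?thesis .
qed

lemma expectation_depth: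
  assumes j: "j < n"
  shows "integrable M (\<lambda>\<omega>. real (depth (\<lambda>l. xi l \<omega>) n j))"
    "expectation (\<lambda>\<omega>. real (depth (\<lambda>l. xi l \<omega>) n j)) = (\<Sum>k. level_sum i (share_prob n) k)"
proof -
  have meas: "(\<lambda>\<omega>. real (depth (\<lambda>l. xi l \<omega>) n j)) \<in> borel_measurable M"
    using measurable_compose[OF measurable_depth, of real borel] by (simp add: measurable_count_space)
  show "integrable M (\<lambda>\<omega>. real (depth (\<lambda>l. xi l \<omega>) n j))"
    using nn_integral_depth[OF j] by (intro integrableI_nonneg[OF meas]) auto
  have "0 \<le> (\<Sum>k. level_sum i (share_prob n) k)"
    using summable_level_sum_share_prob[OF i] level_sum_share_prob_bounds(1)[OF i] by (rule suminf_nonneg)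
  then show "expectation (\<lambda>\<omega>. real (depth (\<lambda>l. xi l \<omega>) n j)) = (\<Sum>k. level_sum i (share_prob n) k)"
    using integral_eq_nn_integral[OF meas] nn_integral_depth[OF j] by simp
qed

lemma expectation_bucket_ops: "expectation (\<lambda>\<omega>. real (bucket_ops (\<lambda>j. xi j \<omega>) n)) = expected_ops i n"
proof -
  have "expectation (\<lambda>\<omega>. real (bucket_ops (\<lambda>j. xi j \<omega>) n))
      = (\<Sum>j<n. expectation (\<lambda>\<omega>. real (depth (\<lambda>l. xi l \<omega>) n j)))"
    unfolding bucket_ops_def of_nat_sum using expectation_depth(1) by (simp add: Bochner_Integration.integral_sum)
  also have "\<dots> = real n * (\<Sum>k. level_sum i (share_prob n) k)"
    by (simp add: expectation_depth(2))
  also have "\<dots> = expected_ops i n"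
    unfolding expected_ops_def level_sum_cmult
    by (rule suminf_mult[OF summable_level_sum_share_prob[OF i], symmetric])
  finally show ?thesis .
qed

end

theorem proposition5p2:
  fixes p :: "nat \<Rightarrow> nat \<Rightarrow> real"
  assumes "\<forall>i\<in>{0,1::nat}. \<forall>j\<in>{0,1::nat}. 0 < p i j \<and> p i j < 1"
    and "\<forall>i\<in>{0,1::nat}. p i 0 + p i 1 = 1"
    and "\<exists>i\<in>{0,1::nat}. \<exists>j\<in>{0,1::nat}. p i j \<noteq> 1/2"
  shows "\<exists>C>0. \<forall>i\<in>{0,1::nat}. \<forall>(M::'a measure) xi.
           markov_strings M xi (p i) p \<longrightarrow>
           (\<forall>m n::nat. \<bar>f_dev M xi p m - f_dev M xi p n\<bar> \<le> C * \<bar>real m - real n\<bar>)"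
proof -
  interpret binary_transition_matrix p
    using assms(1,2) by unfold_locales auto
  have "\<bar>f_dev M xi p m - f_dev M xi p n\<bar> \<le> lipschitz_const * \<bar>real m - real n\<bar>"
    if i: "i \<in> {0,1}" and source: "markov_strings M xi (p i) p" for i and M :: "'a measure" and xi m n
  proof -
    interpret markov_source_strings p M xi i
      using source i by unfold_locales
    have "f_dev M xi p k = expected_ops i k - nlogn k / H" for k
      by (simp add: f_dev_def expectation_bucket_ops)
    then show ?thesis
      using expected_ops_deviation_step[OF i] by (intro lipschitz_of_bounded_increments) simp
  qed
  then show ?thesis using lipschitz_const_pos by blast
qed

end
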